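(* Let $a\ge b\ge1$ be integers with either $b\ge2$, or $b=1$ and $a\ge5$, and define $c_j,d_j$ ($j\in\mathbb Z_+$) by $c_0=d_0=0$, $c_1=d_1=1$, $c_{k+2}+c_k=a d_{k+1}$, $d_{k+2}+d_k=b c_{k+1}$. Then for all $k\in\mathbb Z_+$: $$bc_k^2+ad_{k+1}^2-abc_kd_{k+1}-abc_k+2ad_{k+1}+a>0,$$ $$bc_{k+1}^2+ad_k^2-abc_{k+1}d_k+2bc_{k+1}-abd_k+b>0.$$
   Context: $\mathbb Z_+=\{0,1,2,\dots\}$. *)

theory Defs
  imports Main
begin

fun cd_seq :: "int \<Rightarrow> int \<Rightarrow> nat \<Rightarrow> int \<times> int" where
  "cd_seq a b 0 = (0, 0)"
| "cd_seq a b (Suc 0) = (1, 1)"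
| "cd_seq a b (Suc (Suc k)) =
     (a * snd (cd_seq a b (Suc k)) - fst (cd_seq a b k),
      b * fst (cd_seq a b (Suc k)) - snd (cd_seq a b k))"

definition cseq :: "int \<Rightarrow> int \<Rightarrow> nat \<Rightarrow> int" where
  "cseq a b k = fst (cd_seq a b k)"

definition dseq :: "int \<Rightarrow> int \<Rightarrow> nat \<Rightarrow> int" where
  "dseq a b k = snd (cd_seq a b k)"

lemma cseq_dseq_rec:
  "cseq a b 0 = 0" "dseq a b 0 = 0" "cseq a b 1 = 1" "dseq a b 1 = 1"
  "cseq a b (k + 2) + cseq a b k = a * dseq a b (k + 1)"
  "dseq a b (k + 2) + dseq a b k = b * cseq a b (k + 1)"
  by (simp_all add: cseq_def dseq_def)

end

theory Submission
  imports Defs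
begin

text \<open>The quadratic form \<open>b x\<^sup>2 + a y\<^sup>2 - a b x y\<close> is invariant under the reflections
  \<open>x \<mapsto> a y - x\<close> and \<open>y \<mapsto> b x - y\<close> that drive the recurrence, so on the pairs
  \<open>(c\<^sub>k, d\<^sub>k\<^sub>+\<^sub>1)\<close> it only takes the values \<open>a\<close> and \<open>b\<close>.  When \<open>a b \<ge> 4\<close> the sequences
  grow fast enough that \<open>b c\<^sub>k \<le> 2 d\<^sub>k\<^sub>+\<^sub>1\<close>, so the remaining linear terms of the first
  inequality are nonnegative.  Exchanging \<open>a\<close> and \<open>b\<close> exchanges \<open>c\<close> and \<open>d\<close>, which turns
  the first inequality into the second.\<close>

lemma cseq_Suc_Suc: "cseq a b (Suc (Suc k)) = a * dseq a b (Suc k) - cseq a b k"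
  using cseq_dseq_rec(5)[of a b k] by simp

lemma dseq_Suc_Suc: "dseq a b (Suc (Suc k)) = b * cseq a b (Suc k) - dseq a b k"
  using cseq_dseq_rec(6)[of a b k] by simp

lemma cd_seq_swap: "cd_seq b a k = prod.swap (cd_seq a b k)"
  by (induction a b k rule: cd_seq.induct) simp_all

lemma cseq_swap: "cseq b a k = dseq a b k"
  by (simp add: cseq_def dseq_def cd_seq_swap [of a b])

lemma dseq_swap: "dseq b a k = cseq a b k"
  by (simp add: cseq_def dseq_def cd_seq_swap [of a b])

definition cd_form :: "int \<Rightarrow> int \<Rightarrow> int \<Rightarrow> int \<Rightarrow> int" where
  "cd_form a b x y = b * x\<^sup>2 + a * y\<^sup>2 - a * b * x * y"

lemma cd_form_swap: "cd_form b a y x = cd_form a b x y"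
  by (simp add: cd_form_def algebra_simps)

lemma cd_form_reflect: "cd_form a b (a * y - x) y = cd_form a b x y"
  by (simp add: cd_form_def power2_eq_square algebra_simps)

lemma cd_form_cseq_dseq:
  "cd_form a b (cseq a b k) (dseq a b (Suc k)) = (if even k then a else b)"
proof (induction k arbitrary: a b)
  case 0
  then show ?case by (simp add: cd_form_def cseq_def dseq_def)
next
  case (Suc k)
  have "cd_form a b (cseq a b (Suc k)) (dseq a b (Suc (Suc k)))
      = cd_form b a (cseq b a (Suc (Suc k))) (dseq b a (Suc k))"
    \<comment> \<open>uninstantiated, \<open>cseq_swap\<close> and \<open>dseq_swap\<close> rewrite into each other forever\<close>
    by (simp add: cseq_swap [where a = a and b = b] dseq_swap [where a = a and b = b]
        cd_form_swap [where a = a and b = b])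
  also have "\<dots> = cd_form b a (cseq b a k) (dseq b a (Suc k))"
    by (simp add: cseq_Suc_Suc cd_form_reflect)
  also have "\<dots> = (if even (Suc k) then a else b)"
    using Suc.IH[of b a] by simp
  finally show ?case .
qed

lemma reflection_preserves_ratio_bounds:
  fixes a b x y :: int
  assumes "0 \<le> a" "4 \<le> a * b" "0 \<le> y" "b * x \<le> 2 * y" "2 * x \<le> a * y"
  shows "0 \<le> a * y - x" "a * y \<le> 2 * (a * y - x)" "2 * y \<le> b * (a * y - x)"
proof -
  show "a * y \<le> 2 * (a * y - x)"
    using assms(5) by simp
  moreover have "0 \<le> a * y"
    using assms(1,3) by simp
  ultimately show "0 \<le> a * y - x"
    by simp
  have "2 * y \<le> (a * b - 2) * y"
    using mult_right_mono[of 2 "a * b - 2" y] assms(2,3) by linarith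
  then show "2 * y \<le> b * (a * y - x)"
    using assms(4) by (simp add: algebra_simps)
qed

lemma cseq_dseq_growth:
  assumes "1 \<le> a" "1 \<le> b" "4 \<le> a * b"
  shows "0 \<le> dseq a b (Suc k) \<and> b * cseq a b k \<le> 2 * dseq a b (Suc k)
    \<and> 2 * cseq a b k \<le> a * dseq a b (Suc k)"
  using assms
proof (induction k arbitrary: a b)
  case 0
  then show ?case by (simp add: cseq_def dseq_def)
next
  case (Suc k)
  define x where "x = dseq a b k"
  define y where "y = cseq a b (Suc k)"
  have "4 \<le> b * a"
    using Suc.prems(3) by (simp add: mult.commute)
  then have "0 \<le> y" "a * x \<le> 2 * y" "2 * x \<le> b * y"
    using Suc.IH[of b a] Suc.prems
    by (simp_all add: x_def y_def cseq_swap [where a = a and b = b]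
        dseq_swap [where a = a and b = b])
  from reflection_preserves_ratio_bounds[OF _ \<open>4 \<le> b * a\<close> this] Suc.prems(2)
  show ?case
    by (simp add: dseq_Suc_Suc x_def y_def)
qed

lemma cseq_dseq_first_ineq:
  assumes "1 \<le> a" "1 \<le> b" "4 \<le> a * b"
  shows "b * (cseq a b k)\<^sup>2 + a * (dseq a b (k + 1))\<^sup>2 - a * b * cseq a b k * dseq a b (k + 1)
    - a * b * cseq a b k + 2 * a * dseq a b (k + 1) + a > 0"
proof -
  let ?x = "cseq a b k" and ?y = "dseq a b (k + 1)"
  have "0 < cd_form a b ?x ?y"
    using cd_form_cseq_dseq[of a b k] assms by simp
  moreover have "a * (b * ?x) \<le> a * (2 * ?y)"
    using cseq_dseq_growth[OF assms, of k] assms(1) by simp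
  moreover have "b * ?x\<^sup>2 + a * ?y\<^sup>2 - a * b * ?x * ?y - a * b * ?x + 2 * a * ?y + a
      = cd_form a b ?x ?y + (a * (2 * ?y) - a * (b * ?x)) + a"
    by (simp add: cd_form_def algebra_simps)
  ultimately show ?thesis
    using assms(1) by linarith
qed

theorem lemma4p2:
  fixes a b :: int and k :: nat
  assumes "a \<ge> b" and "b \<ge> 1" and "b \<ge> 2 \<or> (b = 1 \<and> a \<ge> 5)"
  shows "(b * (cseq a b k)^2 + a * (dseq a b (k+1))^2 - a * b * cseq a b k * dseq a b (k+1)
           - a * b * cseq a b k + 2 * a * dseq a b (k+1) + a > 0)
       \<and> (b * (cseq a b (k+1))^2 + a * (dseq a b k)^2 - a * b * cseq a b (k+1) * dseq a b k
           + 2 * b * cseq a b (k+1) - a * b * dseq a b k + b > 0)"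
proof -
  have a: "1 \<le> a" and b: "1 \<le> b"
    using assms by simp_all
  have ab: "4 \<le> a * b"
    using assms mult_mono[of 2 a 2 b] by auto
  have "4 \<le> b * a"
    using ab by (simp add: mult.commute)
  from cseq_dseq_first_ineq[OF b a this, of k]
  have "b * (cseq a b (k + 1))\<^sup>2 + a * (dseq a b k)\<^sup>2 - a * b * cseq a b (k + 1) * dseq a b k
      + 2 * b * cseq a b (k + 1) - a * b * dseq a b k + b > 0"
    by (simp add: cseq_swap [where a = a and b = b] dseq_swap [where a = a and b = b]
        algebra_simps)
  with cseq_dseq_first_ineq[OF a b ab, of k] show ?thesis
    by simp
qed

end
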